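(* Let $X$ be a geodesic space with $r(X)>0$, let $\varepsilon>0$, $0<q\le r(X)/2$, and let $A\subset X$ with $\operatorname{Diam}(A)\le q-2\varepsilon$. Then there exists an open geodesically convex subset $A_\infty\subset X$ containing $A$ with $\operatorname{Diam}(A_\infty)\le q-\varepsilon$.
   Context: A metric space is geodesic if any two points $x,y$ are joined by a path of length $d(x,y)$ (a geodesic; here a geodesic is the image of an isometric embedding of a closed interval). For a geodesic space $X$, $r(X)\ge0$ is the supremum of the real numbers $r$ satisfying: (1) for all $x,y\in X$ with $d(x,y)<2r$ there is a unique shortest geodesic from $x$ to $y$; (2) if $x,y,u\in X$ with $d(x,y)<r$, $d(u,x)<r$, $d(u,y)<r$ and $z$ is a point on the geodesic joining $x$ and $y$, then $d(u,z)\le\max\{d(u,x),d(u,y)\}$; (3) if $\gamma,\gamma'$ are arc-length parameterized geodesics with $\gamma(0)=\gamma'(0)$ and $0\le s,s'<r$, $0\le t<1$, then $d(\gamma(ts),\gamma'(ts'))\le d(\gamma(s),\gamma'(s'))$. A subset $A$ of a ball $B(x_0,r(X))$ is geodesically convex if every (unique shortest) geodesic connecting two points of $A$ lies entirely in $A$. *)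

theory Defs
  imports "HOL-Analysis.Analysis"
begin

text \<open>The geodesic space X is the whole carrier of a type of class metric_space.\<close>

definition isom_on_interval :: "real \<Rightarrow> (real \<Rightarrow> 'a::metric_space) \<Rightarrow> bool" where
  "isom_on_interval L g \<longleftrightarrow> 0 \<le> L \<and>
     (\<forall>a\<in>{0..L}. \<forall>b\<in>{0..L}. dist (g a) (g b) = \<bar>a - b\<bar>)"

definition geodesic_path :: "'a::metric_space \<Rightarrow> 'a \<Rightarrow> (real \<Rightarrow> 'a) \<Rightarrow> bool" where
  "geodesic_path x y g \<longleftrightarrow> isom_on_interval (dist x y) g \<and> g 0 = x \<and> g (dist x y) = y"

definition geodesics :: "'a::metric_space \<Rightarrow> 'a \<Rightarrow> 'a set set" where
  "geodesics x y = {g ` {0..dist x y} | g. geodesic_path x y g}"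

definition geodesic_space :: "'a::metric_space itself \<Rightarrow> bool" where
  "geodesic_space TYPE('a) \<longleftrightarrow> (\<forall>x y::'a. \<exists>g. geodesic_path x y g)"

text \<open>Conditions (1)--(3) for a given r.\<close>
definition r_admissible :: "'a::metric_space itself \<Rightarrow> real \<Rightarrow> bool" where
  "r_admissible TYPE('a) r \<longleftrightarrow>
     (\<forall>x y::'a. dist x y < 2 * r \<longrightarrow> (\<exists>!S. S \<in> geodesics x y)) \<and>
     (\<forall>x y u::'a. dist x y < r \<and> dist u x < r \<and> dist u y < r \<longrightarrow>
        (\<forall>z\<in>\<Union>(geodesics x y). dist u z \<le> max (dist u x) (dist u y))) \<and>
     (\<forall>(g::real \<Rightarrow> 'a) g' L L' s s' t. isom_on_interval L g \<and> isom_on_interval L' g' \<and>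
        g 0 = g' 0 \<and> s \<in> {0..L} \<and> s' \<in> {0..L'} \<and> s < r \<and> s' < r \<and> 0 \<le> t \<and> t < 1 \<longrightarrow>
        dist (g (t * s)) (g' (t * s')) \<le> dist (g s) (g' s'))"

text \<open>r(X), as an extended real (it may be infinite).\<close>
definition rX :: "'a::metric_space itself \<Rightarrow> ereal" where
  "rX TYPE('a) = Sup (ereal ` {r. 0 \<le> r \<and> r_admissible TYPE('a) r})"

definition geod_convex :: "'a::metric_space set \<Rightarrow> bool" where
  "geod_convex A \<longleftrightarrow> (\<exists>x0::'a. \<forall>x\<in>A. ereal (dist x0 x) < rX TYPE('a)) \<and>
     (\<forall>x\<in>A. \<forall>y\<in>A. \<forall>S\<in>geodesics x y. S \<subseteq> A)"

end

theory Submission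
  imports Defs
begin

text \<open>Starting from \<open>A\<close>, alternately adjoin all geodesics between current points and thicken
  to an open \<open>\<epsilon>/2^(n+2)\<close>-neighbourhood. By condition (2) of \<open>r(X)\<close>, adjoining geodesics does not
  increase the diameter as long as it stays below \<open>r(X)\<close>, while the thickenings add at most
  \<open>\<epsilon>/2 + \<epsilon>/4 + \<dots> = \<epsilon>\<close> in total. The union of the resulting increasing chain is open, contains
  every geodesic between two of its points, and has diameter at most \<open>Diam(A) + \<epsilon>\<close>.\<close>

definition geodesic_hull :: "'a::metric_space set \<Rightarrow> 'a set" where
  "geodesic_hull S = S \<union> (\<Union>x\<in>S. \<Union>y\<in>S. \<Union>(geodesics x y))"

definition thickening :: "real \<Rightarrow> 'a::metric_space set \<Rightarrow> 'a set" where
  "thickening d S = (\<Union>s\<in>S. ball s d)"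

lemma open_thickening: "open (thickening d S)"
  by (simp add: thickening_def open_UN)

lemma subset_thickening: "d > 0 \<Longrightarrow> S \<subseteq> thickening d S"
  unfolding thickening_def by force

lemma thickening_dist_le:
  assumes "\<And>x y. x \<in> S \<Longrightarrow> y \<in> S \<Longrightarrow> dist x y \<le> D"
    and "x \<in> thickening d S" "y \<in> thickening d S"
  shows "dist x y \<le> D + 2 * d"
proof -
  obtain a b where ab: "a \<in> S" "b \<in> S" "dist a x < d" "dist b y < d"
    using assms(2,3) unfolding thickening_def by auto
  have "dist x y \<le> dist x a + dist a b + dist b y"
    by (metis add_right_mono dist_triangle order_trans)
  then show ?thesis
    using ab assms(1)[of a b] by (simp add: dist_commute)
qed

lemma geodesic_hull_dist_le_point:
  fixes S :: "'a::metric_space set"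
  assumes adm: "r_admissible TYPE('a) r" and "D < r"
    and S: "\<And>x y. x \<in> S \<Longrightarrow> y \<in> S \<Longrightarrow> dist x y \<le> D"
    and u: "\<And>s. s \<in> S \<Longrightarrow> dist u s \<le> D"
    and z: "z \<in> geodesic_hull S"
  shows "dist u z \<le> D"
proof (cases "z \<in> S")
  case True
  then show ?thesis using u by blast
next
  case False
  then obtain x y where xy: "x \<in> S" "y \<in> S" "z \<in> \<Union>(geodesics x y)"
    using z unfolding geodesic_hull_def by blast
  have "dist u z \<le> max (dist u x) (dist u y)"
    using adm xy S[of x y] u[of x] u[of y] \<open>D < r\<close>
    unfolding r_admissible_def by (meson le_less_trans)
  then show ?thesis
    using u xy by (meson max.boundedI order_trans)
qed

lemma geodesic_hull_dist_le:
  fixes S :: "'a::metric_space set"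
  assumes adm: "r_admissible TYPE('a) r" and "D < r"
    and S: "\<And>x y. x \<in> S \<Longrightarrow> y \<in> S \<Longrightarrow> dist x y \<le> D"
    and "x \<in> geodesic_hull S" "y \<in> geodesic_hull S"
  shows "dist x y \<le> D"
proof -
  have "dist s x \<le> D" if "s \<in> S" for s
    using geodesic_hull_dist_le_point[OF adm \<open>D < r\<close> S] S that \<open>x \<in> geodesic_hull S\<close> by blast
  then show ?thesis
    using geodesic_hull_dist_le_point[OF adm \<open>D < r\<close> S] \<open>y \<in> geodesic_hull S\<close>
    by (simp add: dist_commute)
qed

primrec convexifying_seq :: "'a::metric_space set \<Rightarrow> real \<Rightarrow> nat \<Rightarrow> 'a set" where
  "convexifying_seq A e 0 = A"
| "convexifying_seq A e (Suc n) = thickening (e / 2 ^ (n + 2)) (geodesic_hull (convexifying_seq A e n))"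

lemma geodesic_hull_subset_convexifying_seq_Suc:
  "e > 0 \<Longrightarrow> geodesic_hull (convexifying_seq A e n) \<subseteq> convexifying_seq A e (Suc n)"
  by (simp add: subset_thickening)

lemma incseq_convexifying_seq:
  assumes "e > 0" shows "incseq (convexifying_seq A e)"
proof (rule incseq_SucI)
  fix n
  have "convexifying_seq A e n \<subseteq> geodesic_hull (convexifying_seq A e n)"
    by (simp add: geodesic_hull_def)
  then show "convexifying_seq A e n \<subseteq> convexifying_seq A e (Suc n)"
    using geodesic_hull_subset_convexifying_seq_Suc[OF assms] by blast
qed

lemma common_convexifying_seq:
  assumes "e > 0"
    and "x \<in> (\<Union>n. convexifying_seq A e n)" "y \<in> (\<Union>n. convexifying_seq A e n)"
  obtains n where "x \<in> convexifying_seq A e n" "y \<in> convexifying_seq A e n"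
proof -
  obtain m n where "x \<in> convexifying_seq A e m" "y \<in> convexifying_seq A e n"
    using assms(2,3) by blast
  then show ?thesis
    using that[of "max m n"] incseq_convexifying_seq[OF \<open>e > 0\<close>]
    by (meson incseq_def max.cobounded1 max.cobounded2 subsetD)
qed

lemma convexifying_seq_dist_le:
  fixes A :: "'a::metric_space set"
  assumes adm: "r_admissible TYPE('a) r" and "e > 0" and "D + e < r"
    and A: "\<And>x y. x \<in> A \<Longrightarrow> y \<in> A \<Longrightarrow> dist x y \<le> D"
  shows "x \<in> convexifying_seq A e n \<Longrightarrow> y \<in> convexifying_seq A e n \<Longrightarrow>
    dist x y \<le> D + e * (1 - 1 / 2 ^ n)"
proof (induction n arbitrary: x y)
  case 0
  then show ?case using A by simp
next
  case (Suc n)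
  let ?D = "D + e * (1 - 1 / 2 ^ n)"
  have "e * (1 - 1 / 2 ^ n) \<le> e"
    using \<open>e > 0\<close> by (simp add: mult_le_cancel_left1)
  then have "?D < r" using \<open>D + e < r\<close> by linarith
  then have "dist x y \<le> ?D + 2 * (e / 2 ^ (n + 2))"
    using Suc.prems geodesic_hull_dist_le[OF adm _ Suc.IH]
    by (intro thickening_dist_le[of "geodesic_hull (convexifying_seq A e n)" ?D]) auto
  also have "\<dots> = D + e * (1 - 1 / 2 ^ Suc n)"
    by (simp add: field_simps)
  finally show ?case .
qed

lemma Union_convexifying_seq_dist_le:
  fixes A :: "'a::metric_space set"
  assumes adm: "r_admissible TYPE('a) r" and "e > 0" and "D + e < r"
    and A: "\<And>x y. x \<in> A \<Longrightarrow> y \<in> A \<Longrightarrow> dist x y \<le> D"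
    and x: "x \<in> (\<Union>n. convexifying_seq A e n)" and y: "y \<in> (\<Union>n. convexifying_seq A e n)"
  shows "dist x y \<le> D + e"
proof -
  obtain n where "x \<in> convexifying_seq A e n" "y \<in> convexifying_seq A e n"
    using common_convexifying_seq[OF \<open>e > 0\<close> x y] .
  then have "dist x y \<le> D + e * (1 - 1 / 2 ^ n)"
    using convexifying_seq_dist_le[OF assms(1-4)] by blast
  also have "\<dots> \<le> D + e"
    using \<open>e > 0\<close> by (simp add: mult_le_cancel_left1)
  finally show ?thesis .
qed

lemma open_Union_convexifying_seq:
  assumes "e > 0" shows "open (\<Union>n. convexifying_seq A e n)"
proof -
  have "(\<Union>n. convexifying_seq A e n) = (\<Union>n. convexifying_seq A e (Suc n))"
    using incseq_SucD[OF incseq_convexifying_seq[OF assms]] by blast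
  then show ?thesis
    by (simp add: open_UN open_thickening)
qed

lemma geodesics_subset_Union_convexifying_seq:
  assumes "e > 0"
    and x: "x \<in> (\<Union>n. convexifying_seq A e n)" and y: "y \<in> (\<Union>n. convexifying_seq A e n)"
    and G: "G \<in> geodesics x y"
  shows "G \<subseteq> (\<Union>n. convexifying_seq A e n)"
proof -
  obtain n where "x \<in> convexifying_seq A e n" "y \<in> convexifying_seq A e n"
    using common_convexifying_seq[OF \<open>e > 0\<close> x y] .
  then have "G \<subseteq> geodesic_hull (convexifying_seq A e n)"
    using G unfolding geodesic_hull_def by blast
  also have "\<dots> \<subseteq> convexifying_seq A e (Suc n)"
    using geodesic_hull_subset_convexifying_seq_Suc[OF \<open>e > 0\<close>] .
  finally show ?thesis by blast
qed

lemma bounded_diameter_le_dist_bound: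
  fixes S :: "'a::metric_space set"
  assumes "0 \<le> c" and S: "\<And>x y. x \<in> S \<Longrightarrow> y \<in> S \<Longrightarrow> dist x y \<le> c"
  shows "bounded S \<and> diameter S \<le> c"
proof (cases "S = {}")
  case False
  then obtain x0 where "x0 \<in> S" by auto
  then have "bounded S"
    unfolding bounded_def using S by blast
  moreover have "diameter S \<le> c"
    using False S unfolding diameter_def by (auto intro!: cSUP_least)
  ultimately show ?thesis ..
qed (simp add: \<open>0 \<le> c\<close>)

lemma bounded_diameter_Union_convexifying_seq:
  fixes A :: "'a::metric_space set"
  assumes adm: "r_admissible TYPE('a) r" and "e > 0"
    and "bounded A" and "diameter A + e < r"
  shows "bounded (\<Union>n. convexifying_seq A e n) \<and>
    diameter (\<Union>n. convexifying_seq A e n) \<le> diameter A + e"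
proof (rule bounded_diameter_le_dist_bound)
  show "0 \<le> diameter A + e"
    using diameter_ge_0[OF \<open>bounded A\<close>] \<open>e > 0\<close> by linarith
  have A_dist: "dist x y \<le> diameter A" if "x \<in> A" "y \<in> A" for x y
    using \<open>bounded A\<close> that by (rule diameter_bounded_bound)
  show "dist x y \<le> diameter A + e"
    if "x \<in> (\<Union>n. convexifying_seq A e n)" "y \<in> (\<Union>n. convexifying_seq A e n)" for x y
    using adm \<open>e > 0\<close> \<open>diameter A + e < r\<close> A_dist that by (rule Union_convexifying_seq_dist_le)
qed

lemma geod_convexI:
  fixes S :: "'a::metric_space set"
  assumes "bounded S" and "ereal (diameter S) < rX TYPE('a)"
    and "\<And>x y G. x \<in> S \<Longrightarrow> y \<in> S \<Longrightarrow> G \<in> geodesics x y \<Longrightarrow> G \<subseteq> S"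
  shows "geod_convex S"
proof -
  have "\<exists>x0. \<forall>x\<in>S. ereal (dist x0 x) < rX TYPE('a)"
  proof (cases "S = {}")
    case False
    then obtain x0 where "x0 \<in> S" by auto
    then have "\<forall>x\<in>S. ereal (dist x0 x) \<le> ereal (diameter S)"
      using diameter_bounded_bound[OF \<open>bounded S\<close>] by simp
    then show ?thesis
      using assms(2) le_less_trans by blast
  qed simp
  then show ?thesis
    unfolding geod_convex_def using assms(3) by blast
qed

lemma ex_r_admissible_gt:
  assumes "ereal c < rX TYPE('a::metric_space)"
  obtains r where "r_admissible TYPE('a) r" "c < r"
  using assms unfolding rX_def less_Sup_iff by auto

theorem mainTheorem4:
  fixes A :: "'a::metric_space set" and \<epsilon> q :: real
  assumes "geodesic_space TYPE('a)"
    and "rX TYPE('a) > 0"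
    and "\<epsilon> > 0" and "q > 0" and "ereal q \<le> rX TYPE('a) / 2"
    and "bounded A" and "diameter A \<le> q - 2 * \<epsilon>"
  shows "\<exists>A_inf. open A_inf \<and> geod_convex A_inf \<and> A \<subseteq> A_inf \<and>
           bounded A_inf \<and> diameter A_inf \<le> q - \<epsilon>"
proof -
  have "ereal (q - \<epsilon>) < rX TYPE('a)"
    using assms(2,3,5) by (cases "rX TYPE('a)") auto
  then obtain r where r: "r_admissible TYPE('a) r" "q - \<epsilon> < r"
    by (rule ex_r_admissible_gt)
  define A_inf where "A_inf = (\<Union>n. convexifying_seq A \<epsilon> n)"
  have "diameter A + \<epsilon> < r"
    using assms(7) r(2) by linarith
  then have bounded: "bounded A_inf" and diameter: "diameter A_inf \<le> q - \<epsilon>"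
    using bounded_diameter_Union_convexifying_seq[OF r(1) \<open>\<epsilon> > 0\<close> \<open>bounded A\<close>] assms(7)
    unfolding A_inf_def by auto
  have "geod_convex A_inf"
  proof (rule geod_convexI[OF bounded])
    show "ereal (diameter A_inf) < rX TYPE('a)"
      using diameter \<open>ereal (q - \<epsilon>) < rX TYPE('a)\<close> by (meson ereal_less_eq(3) le_less_trans)
    show "G \<subseteq> A_inf" if "x \<in> A_inf" "y \<in> A_inf" "G \<in> geodesics x y" for x y G
      using geodesics_subset_Union_convexifying_seq[OF \<open>\<epsilon> > 0\<close>] that unfolding A_inf_def .
  qed
  moreover have "open A_inf"
    unfolding A_inf_def by (rule open_Union_convexifying_seq[OF \<open>\<epsilon> > 0\<close>])
  moreover have "A \<subseteq> A_inf"
    unfolding A_inf_def using convexifying_seq.simps(1) by blast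
  ultimately show ?thesis
    using bounded diameter by blast
qed

end
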